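(* Let $T_k$ be a tournament on $k$ vertices and let $n$ be a positive integer. If Breaker has a winning strategy in the $(2:1)$ Maker–Breaker game $\mathcal{H}(T_k,n)$, then OBreaker has a winning strategy in the orientation game $Or(T_k,n)$.
   Context: The game $\mathcal{H}(T_k,n)=(X,\mathcal{F}(T_k))$ has board $X=\{(u,v): u,v\in V(K_n),\ u\ne v\}$, the set of ordered pairs of distinct vertices. Its winning sets are $\mathcal{F}(T_k)=\{S\subseteq X: S \text{ is the arc set of a copy of } T_k\}$. The players alternately claim unclaimed elements, Maker claiming $2$ per round and Breaker $1$ per round. Maker wins if she claims all elements of some winning set. The orientation game $Or(T_k,n)$ is played on the edges of $K_n$ by OMaker (moving first) and OBreaker. They alternately choose a previously undirected edge and give it a direction. OMaker wins if the final digraph, containing both players' directed edges, contains a copy of $T_k$; otherwise OBreaker wins. *)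

theory Defs
  imports Main
begin

definition is_tournament :: "nat \<Rightarrow> (nat \<times> nat) set \<Rightarrow> bool" where
  "is_tournament k A \<longleftrightarrow> A \<subseteq> {0..<k} \<times> {0..<k} \<and> (\<forall>a. (a, a) \<notin> A) \<and>
     (\<forall>a<k. \<forall>b<k. a \<noteq> b \<longrightarrow> ((a, b) \<in> A \<longleftrightarrow> (b, a) \<notin> A))"

definition board :: "nat \<Rightarrow> (nat \<times> nat) set" where
  "board n = {(u, v). u < n \<and> v < n \<and> u \<noteq> v}"

definition winsets :: "nat \<Rightarrow> nat \<Rightarrow> (nat \<times> nat) set \<Rightarrow> (nat \<times> nat) set set" where
  "winsets n k A = {S. \<exists>f. inj_on f {0..<k} \<and> f ` {0..<k} \<subseteq> {0..<n} \<and>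
                         S = (\<lambda>(a, b). (f a, f b)) ` A}"

definition contains_copy :: "nat \<Rightarrow> nat \<Rightarrow> (nat \<times> nat) set \<Rightarrow> (nat \<times> nat) set \<Rightarrow> bool" where
  "contains_copy n k A D \<longleftrightarrow> (\<exists>S \<in> winsets n k A. S \<subseteq> D)"

text \<open>(2:1) Maker-Breaker game H(T_k,n), Maker moving first.
  mb_breaker_wins n k A M B: in the position where Maker has claimed M, Breaker has claimed B
  and it is Maker's turn, Breaker has a winning strategy.\<close>
inductive mb_breaker_wins :: "nat \<Rightarrow> nat \<Rightarrow> (nat \<times> nat) set \<Rightarrow> (nat \<times> nat) set \<Rightarrow> (nat \<times> nat) set \<Rightarrow> bool"
  for n k A where
  mb_end: "board n - M - B = {} \<Longrightarrow> \<not> contains_copy n k A M \<Longrightarrow> mb_breaker_wins n k A M B"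
| mb_step: "board n - M - B \<noteq> {} \<Longrightarrow>
    (\<forall>S. S \<subseteq> board n - M - B \<and> card S = min 2 (card (board n - M - B)) \<longrightarrow>
        (board n - M - B - S = {} \<longrightarrow> \<not> contains_copy n k A (M \<union> S)) \<and>
        (board n - M - B - S \<noteq> {} \<longrightarrow>
           (\<exists>e \<in> board n - M - B - S. mb_breaker_wins n k A (M \<union> S) (insert e B))))
    \<Longrightarrow> mb_breaker_wins n k A M B"

text \<open>Orientation game Or(T_k,n). A position is the set D of arcs directed so far;
  an edge {u,v} of K_n is undirected iff neither (u,v) nor (v,u) is in D.\<close>
definition undirected :: "nat \<Rightarrow> (nat \<times> nat) set \<Rightarrow> (nat \<times> nat) set" where
  "undirected n D = {(u, v). u < n \<and> v < n \<and> u \<noteq> v \<and> (u, v) \<notin> D \<and> (v, u) \<notin> D}"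

text \<open>or_breaker_wins n k A D: OMaker to move in position D, OBreaker has a winning strategy.\<close>
inductive or_breaker_wins :: "nat \<Rightarrow> nat \<Rightarrow> (nat \<times> nat) set \<Rightarrow> (nat \<times> nat) set \<Rightarrow> bool"
  for n k A where
  or_end: "undirected n D = {} \<Longrightarrow> \<not> contains_copy n k A D \<Longrightarrow> or_breaker_wins n k A D"
| or_step: "undirected n D \<noteq> {} \<Longrightarrow>
    (\<forall>e \<in> undirected n D.
        (undirected n (insert e D) = {} \<longrightarrow> \<not> contains_copy n k A (insert e D)) \<and>
        (undirected n (insert e D) \<noteq> {} \<longrightarrow>
           (\<exists>e' \<in> undirected n (insert e D). or_breaker_wins n k A (insert e' (insert e D)))))
    \<Longrightarrow> or_breaker_wins n k A D"

end

theory Submission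
  imports Defs
begin

text \<open>OBreaker simulates Breaker's winning strategy while handing every arc of the orientation
  game to Maker. In each round Maker claims OMaker's new arc together with OBreaker's arc of the
  previous round (in the first round, together with the reverse of OMaker's arc). Breaker answers
  with a pair b, and OBreaker directs an edge so that b can never become an arc: the reverse of b if
  that edge is still undirected, any edge otherwise. Every arc of the orientation game therefore
  ends up in Maker's set, every undirected edge stays free in the Maker-Breaker game, and since
  Maker never completes a copy of T_k, neither does the final digraph.\<close>

lemma finite_board: "finite (board n)"
proof -
  have "board n \<subseteq> {..<n} \<times> {..<n}" by (auto simp: board_def)
  then show ?thesis by (rule finite_subset) auto
qed

lemma contains_copy_mono: "contains_copy n k A X \<Longrightarrow> X \<subseteq> Y \<Longrightarrow> contains_copy n k A Y"
  unfolding contains_copy_def by blast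

lemma mb_breaker_wins_no_copy:
  assumes "mb_breaker_wins n k A M B" "X \<subseteq> board n - M - B" "card X \<le> 2"
  shows "\<not> contains_copy n k A (M \<union> X)"
  using assms
proof (induction arbitrary: X rule: mb_breaker_wins.induct)
  case (mb_end M B)
  then have "X = {}" by (simp only: mb_end.hyps(1) subset_empty)
  with mb_end.hyps show ?case by simp
next
  case (mb_step M B)
  let ?F = "board n - M - B"
  have "finite ?F" by (simp add: finite_board)
  have "card X \<le> card ?F" using mb_step.prems(1) \<open>finite ?F\<close> by (rule card_mono[rotated])
  then have "card X \<le> min 2 (card ?F)" using mb_step.prems(2) by simp
  then obtain S where S: "X \<subseteq> S" "S \<subseteq> ?F" "card S = min 2 (card ?F)"
    using exists_subset_between min.cobounded2 mb_step.prems(1) \<open>finite ?F\<close> by metis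
  note breaker_move = mb_step.IH[rule_format, OF conjI[OF S(2,3)]]
  have "\<not> contains_copy n k A (M \<union> S)"
  proof (cases "?F - S = {}")
    case True
    then show ?thesis using breaker_move by blast
  next
    case False
    then obtain b where
      "\<And>X. X \<subseteq> board n - (M \<union> S) - insert b B \<Longrightarrow> card X \<le> 2 \<Longrightarrow>
         \<not> contains_copy n k A (M \<union> S \<union> X)"
      using breaker_move by blast
    from this[of "{}"] show ?thesis by simp
  qed
  then show ?case using S(1) contains_copy_mono by blast
qed

lemma undirected_insert: "undirected n (insert e D) = undirected n D - {e, prod.swap e}"
  by (cases e) (auto simp: undirected_def)

lemma swap_in_undirected: "x \<in> undirected n D \<Longrightarrow> prod.swap x \<in> undirected n D"
  by (cases x) (auto simp: undirected_def)

lemma undirected_not_in: "x \<in> undirected n D \<Longrightarrow> x \<notin> D"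
  by (cases x) (auto simp: undirected_def)

lemma swap_neq_if_undirected: "x \<in> undirected n D \<Longrightarrow> prod.swap x \<noteq> x"
  by (cases x) (auto simp: undirected_def)

lemma undirected_subset_board: "undirected n D \<subseteq> board n"
  by (auto simp: undirected_def board_def)

lemma obreaker_reply:
  assumes "undirected n D \<noteq> {}"
  obtains e where "e \<in> undirected n D" "e \<noteq> b" "b \<notin> undirected n (insert e D)"
proof (cases "prod.swap b \<in> undirected n D")
  case True
  then show ?thesis
    using that swap_neq_if_undirected[OF True] undirected_insert[of n "prod.swap b" D]
    by (cases b) auto
next
  case False
  then have "b \<notin> undirected n D" using swap_in_undirected by fastforce
  with assms that undirected_insert show ?thesis by blast
qed

text \<open>P holds OBreaker's last arc, which Maker claims only in her next move.\<close>

definition simulates :: "nat \<Rightarrow> (nat \<times> nat) set \<Rightarrow> (nat \<times> nat) set \<Rightarrow> (nat \<times> nat) set \<Rightarrow>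
    (nat \<times> nat) set \<Rightarrow> bool" where
  "simulates n M B P D \<longleftrightarrow> undirected n D \<subseteq> board n - M - B \<and> D \<subseteq> M \<union> P \<and>
     P \<subseteq> board n - M - B \<and> P \<subseteq> D \<and> (\<exists>p. P \<subseteq> {p})"

lemma maker_claim:
  assumes "simulates n M B P D" "e \<in> undirected n D"
  obtains S where "S \<subseteq> board n - M - B" "card S = 2" "insert e D \<subseteq> M \<union> S"
    "undirected n (insert e D) \<subseteq> board n - M - B - S"
proof -
  from assms(1) obtain p where
    undirected_free: "undirected n D \<subseteq> board n - M - B" and D_claimed: "D \<subseteq> M \<union> P" and
    P_free: "P \<subseteq> board n - M - B" and P_in_D: "P \<subseteq> D" and P_single: "P \<subseteq> {p}"
    by (auto simp: simulates_def)
  define S where "S = insert e (if P = {} then {prod.swap e} else P)"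
  have "card S = 2"
  proof (cases "P = {}")
    case True
    then show ?thesis using swap_neq_if_undirected[OF assms(2)] by (simp add: S_def)
  next
    case False
    with P_single have "P = {p}" by blast
    moreover have "p \<noteq> e" using \<open>P = {p}\<close> P_in_D undirected_not_in[OF assms(2)] by blast
    ultimately show ?thesis by (simp add: S_def)
  qed
  moreover have "S \<subseteq> board n - M - B"
    using assms(2) swap_in_undirected[OF assms(2)] undirected_free P_free by (auto simp: S_def)
  moreover have "insert e D \<subseteq> M \<union> S"
    using D_claimed by (auto simp: S_def)
  moreover have "undirected n (insert e D) \<subseteq> board n - M - B - S"
  proof
    fix x assume x: "x \<in> undirected n (insert e D)"
    then have "x \<in> undirected n D" "x \<noteq> e" "x \<noteq> prod.swap e"
      by (simp_all add: undirected_insert)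
    moreover have "x \<notin> P" using undirected_not_in[OF x] P_in_D by blast
    ultimately show "x \<in> board n - M - B - S" using undirected_free by (auto simp: S_def)
  qed
  ultimately show ?thesis using that by blast
qed

lemma simulates_after_round:
  assumes "D \<subseteq> M \<union> S" "undirected n D \<subseteq> board n - M - B - S"
    and "e \<in> undirected n D" "e \<noteq> b" "b \<notin> undirected n (insert e D)"
  shows "simulates n (M \<union> S) (insert b B) {e} (insert e D)"
proof -
  have "undirected n (insert e D) \<subseteq> board n - (M \<union> S) - insert b B"
    using assms(2,5) undirected_insert[of n e D] by auto
  moreover have "{e} \<subseteq> board n - (M \<union> S) - insert b B"
    using assms(2-4) by auto
  ultimately show ?thesis
    using assms(1) by (auto simp: simulates_def)
qed

lemma no_copy_if_simulates:
  assumes "mb_breaker_wins n k A M B" "simulates n M B P D"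
  shows "\<not> contains_copy n k A D"
proof -
  from assms(2) obtain p where "D \<subseteq> M \<union> P" "P \<subseteq> board n - M - B" "P \<subseteq> {p}"
    by (auto simp: simulates_def)
  moreover from \<open>P \<subseteq> {p}\<close> have "card P \<le> 2"
    using card_mono[of "{p}" P] by simp
  ultimately show ?thesis
    using mb_breaker_wins_no_copy[OF assms(1), of P] contains_copy_mono by blast
qed

lemma or_breaker_wins_if_simulates:
  assumes "mb_breaker_wins n k A M B" "simulates n M B P D"
  shows "or_breaker_wins n k A D"
  using assms
proof (induction arbitrary: P D rule: mb_breaker_wins.induct)
  case (mb_end M B)
  then have "undirected n D = {}" by (auto simp: simulates_def)
  moreover have "\<not> contains_copy n k A D"
    using no_copy_if_simulates[OF mb_breaker_wins.mb_end[OF mb_end.hyps] mb_end.prems] .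
  ultimately show ?case by (rule or_end)
next
  case (mb_step M B)
  let ?F = "board n - M - B"
  have mbw: "mb_breaker_wins n k A M B"
    using mb_step.hyps(1)
  proof (rule mb_breaker_wins.mb_step, intro allI impI)
    fix S assume "S \<subseteq> ?F \<and> card S = min 2 (card ?F)"
    from mb_step.IH[rule_format, OF this]
    show "(?F - S = {} \<longrightarrow> \<not> contains_copy n k A (M \<union> S)) \<and>
        (?F - S \<noteq> {} \<longrightarrow> (\<exists>b\<in>?F - S. mb_breaker_wins n k A (M \<union> S) (insert b B)))"
      by fast
  qed
  show ?case
  proof (cases "undirected n D = {}")
    case True
    then show ?thesis using no_copy_if_simulates[OF mbw mb_step.prems] by (rule or_end)
  next
    case False
    show ?thesis
    proof (rule or_step[OF False], intro ballI conjI impI)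
      fix e assume e: "e \<in> undirected n D"
      let ?D = "insert e D"
      obtain S where S: "S \<subseteq> ?F" "card S = 2" "?D \<subseteq> M \<union> S" "undirected n ?D \<subseteq> ?F - S"
        using maker_claim[OF mb_step.prems e] by blast
      have "\<not> contains_copy n k A (M \<union> S)"
        using mb_breaker_wins_no_copy[OF mbw S(1)] S(2) by simp
      with S(3) show "\<not> contains_copy n k A ?D" if "undirected n ?D = {}"
        by (metis contains_copy_mono)
      assume nonempty: "undirected n ?D \<noteq> {}"
      have "card S = min 2 (card ?F)"
        using S(1,2) finite_board card_mono[of ?F S] by simp
      note breaker_move = mb_step.IH[rule_format, OF conjI[OF S(1) this]]
      from nonempty S(4) have "?F - S \<noteq> {}" by blast
      with breaker_move obtain b where b: "b \<in> ?F - S"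
        "\<And>P D'. simulates n (M \<union> S) (insert b B) P D' \<Longrightarrow> or_breaker_wins n k A D'"
        by blast
      obtain e' where e': "e' \<in> undirected n ?D" "e' \<noteq> b" "b \<notin> undirected n (insert e' ?D)"
        using obreaker_reply[OF nonempty] by blast
      with b(2) simulates_after_round[OF S(3,4)]
      show "\<exists>e'\<in>undirected n ?D. or_breaker_wins n k A (insert e' ?D)"
        by blast
    qed
  qed
qed

theorem mainTheorem7:
  fixes n k :: nat and A :: "(nat \<times> nat) set"
  assumes "is_tournament k A"
    and "0 < n"
    and "mb_breaker_wins n k A {} {}"
  shows "or_breaker_wins n k A {}"
proof -
  \<comment> \<open>The simulation works for any arc set A and any n.\<close>
  have "simulates n {} {} {} {}"
    using undirected_subset_board by (simp add: simulates_def)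
  with assms(3) show ?thesis by (rule or_breaker_wins_if_simulates)
qed

end
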